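(* Let $p$ be a prime, $a\ge 1$ an integer, and $n=p^a$. With $L$ and $R$ the matrices indexed by $P(n)$ defined in the context, \[\dim\ker (pR+L)\ge a.\]
   Context: Let $\phi$ denote Euler's totient function. For a positive integer $n$ let $P(n)=\{(i,j): j\mid n,\ i\mid j\}$. Define square matrices $L$ and $R$ with rows and columns indexed by $P(n)$ as follows. For a row index $(i,j)$ and a column index $(d,c)$: $L_{(i,j)}^{(d,c)} = \phi(d)\,\frac{n}{\operatorname{lcm}(j,c)}$ if $d\mid i$ and $j\mid \operatorname{lcm}(i,c)$, and $0$ otherwise. For the row $(i,j)$, let $v$ be the largest divisor of $i$ coprime with $j/i$ and put $u=i/v$. Then $R_{(i,j)}^{(e,c)} = u\,\phi(ev/j)\,\frac{n}{\operatorname{lcm}(j,c)}$ if $(j/v)\mid e$, $e\mid j$ and $j\mid\operatorname{lcm}(i,c)$, and $0$ otherwise. Here $\ker(pR+L)$ may be taken as the left kernel (space of row vectors $w$ with $w(pR+L)=0$); its dimension equals that of the right kernel. *)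

theory Defs
  imports "HOL-Number_Theory.Totient" "HOL-Library.Product_Lexorder"
          "Jordan_Normal_Form.Matrix_Kernel"
begin

definition Pset :: "nat \<Rightarrow> (nat \<times> nat) set" where
  "Pset n = {(i, j). j dvd n \<and> i dvd j}"

(* a fixed enumeration of P(n) (n > 0), used to index rows/columns *)
definition Pidx :: "nat \<Rightarrow> (nat \<times> nat) list" where
  "Pidx n = sorted_list_of_set (Pset n)"

definition Lentry :: "nat \<Rightarrow> nat \<times> nat \<Rightarrow> nat \<times> nat \<Rightarrow> rat" where
  "Lentry n r cl = (case r of (i, j) \<Rightarrow> case cl of (d, c) \<Rightarrow>
     if d dvd i \<and> j dvd lcm i c
     then of_nat (totient d) * of_nat (n div lcm j c) else 0)"

definition vpart :: "nat \<Rightarrow> nat \<Rightarrow> nat" where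
  "vpart i j = (GREATEST v. v dvd i \<and> coprime v (j div i))"

definition upart :: "nat \<Rightarrow> nat \<Rightarrow> nat" where
  "upart i j = i div vpart i j"

definition Rentry :: "nat \<Rightarrow> nat \<times> nat \<Rightarrow> nat \<times> nat \<Rightarrow> rat" where
  "Rentry n r cl = (case r of (i, j) \<Rightarrow> case cl of (e, c) \<Rightarrow>
     (let v = vpart i j; u = upart i j in
      if (j div v) dvd e \<and> e dvd j \<and> j dvd lcm i c
      then of_nat u * of_nat (totient (e * v div j)) * of_nat (n div lcm j c)
      else 0))"

definition Lmat :: "nat \<Rightarrow> rat mat" where
  "Lmat n = mat (length (Pidx n)) (length (Pidx n))
     (\<lambda>(r, c). Lentry n (Pidx n ! r) (Pidx n ! c))"

definition Rmat :: "nat \<Rightarrow> rat mat" where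
  "Rmat n = mat (length (Pidx n)) (length (Pidx n))
     (\<lambda>(r, c). Rentry n (Pidx n ! r) (Pidx n ! c))"

end

theory Submission imports Defs begin

text \<open>
  For \<open>n = p\<^sup>a\<close> the index set \<open>P(n)\<close> is \<open>{(p\<^sup>x, p\<^sup>y). x \<le> y \<le> a}\<close>, all entries of
  \<open>pR + L\<close> are explicit in the exponents, and summing them over a column segment \<open>x \<le> M\<close>
  only needs \<open>\<Sum>\<^bsub>x \<le> k\<^esub> \<phi>(p\<^sup>x) = p\<^sup>k\<close>. For \<open>m < a\<close> let \<open>w\<^sub>m\<close> be \<open>1\<close> on the column \<open>y = m\<close>,
  \<open>1\<close> at \<open>(p\<^bsup>m+1\<^esup>, p\<^bsup>m+1\<^esup>)\<close> and \<open>-p\<close> elsewhere on the column \<open>y = m + 1\<close>. If \<open>C(M, y)\<close> is the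
  sum of a row of \<open>pR + L\<close> over the column segment \<open>x \<le> M\<close> of column \<open>y\<close>, the row times \<open>w\<^sub>m\<close> is
  \<open>C(m, m) + C(m+1, m+1) - (p + 1) C(m, m+1)\<close>, which vanishes by the closed form of \<open>C\<close>.
  The \<open>w\<^sub>m\<close> are independent: the coordinates \<open>(p\<^bsup>m+1\<^esup>, p\<^bsup>m+1\<^esup>)\<close> and \<open>(1, p\<^bsup>m+1\<^esup>)\<close> of a
  vanishing combination \<open>\<Sum> d\<^sub>m w\<^sub>m\<close> give \<open>d\<^bsub>m+1\<^esub> + d\<^sub>m = 0 = d\<^bsub>m+1\<^esub> - p d\<^sub>m\<close>, so \<open>d\<^sub>m = 0\<close>.
\<close>

lemma lcm_power_power_nat: "lcm ((p::nat) ^ x) (p ^ y) = p ^ max x y"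
  by (cases "x \<le> y") (simp_all add: le_imp_power_dvd lcm_proj1_if_dvd lcm_proj2_if_dvd max_def)

lemma prime_power_dvd_prime_power_iff: "prime (p::nat) \<Longrightarrow> p ^ x dvd p ^ y \<longleftrightarrow> x \<le> y"
  by (simp add: dvd_power_iff_le prime_ge_2_nat)

lemma prime_power_div_prime_power: "prime (p::nat) \<Longrightarrow> y \<le> a \<Longrightarrow> p ^ a div p ^ y = p ^ (a - y)"
  by (simp add: power_diff prime_gt_0_nat)

lemma sum_totient_prime_powers:
  assumes "prime p"
  shows "(\<Sum>x\<le>k. totient (p ^ x)) = p ^ k"
proof -
  have "{d. d dvd p ^ k} = (\<lambda>x. p ^ x) ` {..k}"
    using divides_primepow_nat[OF assms] by auto
  moreover have "inj_on (\<lambda>x. p ^ x) {..k}"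
    using prime_gt_1_nat[OF assms] by (auto simp: inj_on_def)
  ultimately show ?thesis
    using totient_divisor_sum[of "p ^ k"] by (simp add: sum.reindex)
qed

lemma vpart_self: "0 < i \<Longrightarrow> vpart i i = i"
  unfolding vpart_def by (rule Greatest_equality) (auto dest: dvd_imp_le)

lemma vpart_prime_power_less:
  assumes p: "prime p" and "s < t"
  shows "vpart (p ^ s) (p ^ t) = 1"
  unfolding vpart_def
proof (rule Greatest_equality)
  fix v assume v: "v dvd p ^ s \<and> coprime v (p ^ t div p ^ s)"
  then obtain i where "v = p ^ i" using divides_primepow_nat[OF p] by blast
  moreover have "p dvd p ^ t div p ^ s"
    using \<open>s < t\<close> by (simp add: prime_power_div_prime_power[OF p])
  ultimately have "i = 0"
    using v p by (metis coprime_common_divisor dvd_power gr0I not_prime_unit)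
  then show "v \<le> 1" using \<open>v = p ^ i\<close> by simp
qed simp

lemma Pset_prime_power:
  assumes p: "prime p"
  shows "Pset (p ^ a) = (\<lambda>(y, x). (p ^ x, p ^ y)) ` (SIGMA y:{..a}. {..y})"
proof (intro equalityI subsetI)
  fix z assume "z \<in> Pset (p ^ a)"
  then obtain i j where z: "z = (i, j)" "j dvd p ^ a" "i dvd j" unfolding Pset_def by auto
  obtain y where y: "y \<le> a" "j = p ^ y" using z(2) divides_primepow_nat[OF p] by blast
  obtain x where x: "x \<le> y" "i = p ^ x" using z(3) y(2) divides_primepow_nat[OF p] by blast
  show "z \<in> (\<lambda>(y, x). (p ^ x, p ^ y)) ` (SIGMA y:{..a}. {..y})" using x y z by force
qed (auto simp: Pset_def le_imp_power_dvd)

lemma Lentry_prime_power: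
  assumes "prime p" "t \<le> a" "y \<le> a"
  shows "Lentry (p ^ a) (p ^ s, p ^ t) (p ^ x, p ^ y)
    = (if x \<le> s \<and> t \<le> max s y then of_nat (totient (p ^ x)) * of_nat p ^ (a - max t y) else 0)"
  using assms by (simp add: Lentry_def lcm_power_power_nat prime_power_dvd_prime_power_iff
      prime_power_div_prime_power of_nat_power)

lemma Rentry_prime_power_diag:
  assumes "prime p" "s \<le> a" "y \<le> a"
  shows "Rentry (p ^ a) (p ^ s, p ^ s) (p ^ x, p ^ y)
    = (if x \<le> s then of_nat (totient (p ^ x)) * of_nat p ^ (a - max s y) else 0)"
  using assms by (simp add: Rentry_def upart_def vpart_self prime_gt_0_nat lcm_power_power_nat
      prime_power_dvd_prime_power_iff prime_power_div_prime_power of_nat_power)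

lemma Rentry_prime_power_offdiag:
  assumes "prime p" "s < t" "t \<le> a" "y \<le> a"
  shows "Rentry (p ^ a) (p ^ s, p ^ t) (p ^ x, p ^ y)
    = (if x = t \<and> t \<le> y then of_nat p ^ s * of_nat p ^ (a - max t y) else 0)"
  using assms by (auto simp add: Rentry_def upart_def vpart_prime_power_less prime_gt_0_nat
      lcm_power_power_nat prime_power_dvd_prime_power_iff prime_power_div_prime_power of_nat_power)

lemma sum_totient_prime_powers_upto:
  assumes "prime p"
  shows "(\<Sum>x\<le>M. if x \<le> s then of_nat (totient (p ^ x)) else 0) = (of_nat p ^ min M s :: rat)"
proof -
  have "(\<Sum>x\<le>M. if x \<le> s then of_nat (totient (p ^ x)) else 0)
      = (\<Sum>x\<le>min M s. of_nat (totient (p ^ x)) :: rat)"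
    by (rule sum.mono_neutral_cong_right) auto
  also have "\<dots> = of_nat p ^ min M s"
    using sum_totient_prime_powers[OF assms] by (metis of_nat_power of_nat_sum)
  finally show ?thesis .
qed

definition pRL_column_sum :: "nat \<Rightarrow> nat \<Rightarrow> nat \<Rightarrow> nat \<Rightarrow> nat \<Rightarrow> nat \<Rightarrow> rat" where
  "pRL_column_sum p a s t M y =
     ((if t \<le> max s y then of_nat p ^ min M s else 0)
      + of_nat p * (if s = t then of_nat p ^ min M s else if t \<le> M then of_nat p ^ s else 0))
     * of_nat p ^ (a - max t y)"

lemma sum_pRL_column_prime_power:
  assumes p: "prime p" and "s \<le> t" "t \<le> a" "M \<le> y" "y \<le> a"
  shows "(\<Sum>x\<le>M. of_nat p * Rentry (p ^ a) (p ^ s, p ^ t) (p ^ x, p ^ y)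
                 + Lentry (p ^ a) (p ^ s, p ^ t) (p ^ x, p ^ y))
    = pRL_column_sum p a s t M y"
proof -
  define e where "e = (of_nat p :: rat) ^ (a - max t y)"
  have "(\<Sum>x\<le>M. Lentry (p ^ a) (p ^ s, p ^ t) (p ^ x, p ^ y))
      = (\<Sum>x\<le>M. (if x \<le> s then of_nat (totient (p ^ x)) else 0) * (if t \<le> max s y then e else 0))"
    using assms by (intro sum.cong) (simp_all add: Lentry_prime_power e_def)
  also have "\<dots> = (if t \<le> max s y then of_nat p ^ min M s else 0) * e"
    by (simp add: sum_distrib_right[symmetric] sum_totient_prime_powers_upto[OF p])
  finally have L: "(\<Sum>x\<le>M. Lentry (p ^ a) (p ^ s, p ^ t) (p ^ x, p ^ y))
      = (if t \<le> max s y then of_nat p ^ min M s else 0) * e" .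
  have R: "(\<Sum>x\<le>M. Rentry (p ^ a) (p ^ s, p ^ t) (p ^ x, p ^ y))
      = (if s = t then of_nat p ^ min M s else if t \<le> M then of_nat p ^ s else 0) * e"
  proof (cases "s = t")
    case True
    then have "(\<Sum>x\<le>M. Rentry (p ^ a) (p ^ s, p ^ t) (p ^ x, p ^ y))
        = (\<Sum>x\<le>M. (if x \<le> s then of_nat (totient (p ^ x)) else 0) * e)"
      using assms by (intro sum.cong) (simp_all add: Rentry_prime_power_diag e_def)
    then show ?thesis
      using True by (simp add: sum_distrib_right[symmetric] sum_totient_prime_powers_upto[OF p])
  next
    case False
    then have "(\<Sum>x\<le>M. Rentry (p ^ a) (p ^ s, p ^ t) (p ^ x, p ^ y))
        = (\<Sum>x\<le>M. if x = t then of_nat p ^ s * e else 0)"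
      using assms by (intro sum.cong) (auto simp: Rentry_prime_power_offdiag e_def)
    then show ?thesis using False by simp
  qed
  show ?thesis
    by (simp add: pRL_column_sum_def sum.distrib sum_distrib_left[symmetric] L R e_def
        algebra_simps)
qed

lemma pRL_column_sum_identity:
  assumes "s \<le> t" "m < a"
  shows "pRL_column_sum p a s t m m + pRL_column_sum p a s t (Suc m) (Suc m)
    = (1 + of_nat p) * pRL_column_sum p a s t m (Suc m)"
proof -
  have "s = t \<or> t \<le> m \<or> t = Suc m \<or> Suc m < t" using assms by linarith
  moreover have "a - m = Suc (a - Suc m)" using assms by simp
  ultimately show ?thesis
    using assms unfolding pRL_column_sum_def by (auto simp: max_def min_def le_Suc_eq algebra_simps)
qed

definition kernel_witness :: "nat \<Rightarrow> nat \<Rightarrow> nat \<times> nat \<Rightarrow> rat" where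
  "kernel_witness p m = (\<lambda>(i, j). if j = p ^ m then 1
     else if j = p ^ Suc m then (if i = p ^ Suc m then 1 else - of_nat p) else 0)"

lemma kernel_witness_prime_power:
  assumes "prime p"
  shows "kernel_witness p m (p ^ x, p ^ y)
    = (if y = m then 1 else if y = Suc m then (if x = Suc m then 1 else - of_nat p) else 0)"
proof -
  have "1 < p" using prime_gt_1_nat[OF assms] .
  then have "p ^ y = p ^ m \<longleftrightarrow> y = m" "p ^ y = p ^ Suc m \<longleftrightarrow> y = Suc m"
    "p ^ x = p ^ Suc m \<longleftrightarrow> x = Suc m"
    by (simp_all only: power_inject_exp) \<comment> \<open>\<open>simp\<close> would first unfold \<open>p ^ Suc m\<close>\<close>
  then show ?thesis by (simp only: kernel_witness_def case_prod_conv)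
qed

lemma kernel_witness_row_sum:
  assumes p: "prime p" and \<rho>: "\<rho> \<in> Pset (p ^ a)" and m: "m < a"
  shows "(\<Sum>q\<in>Pset (p ^ a). (of_nat p * Rentry (p ^ a) \<rho> q + Lentry (p ^ a) \<rho> q)
      * kernel_witness p m q) = 0"
proof -
  obtain s t where \<rho>_eq: "\<rho> = (p ^ s, p ^ t)" and st: "s \<le> t" "t \<le> a"
    using \<rho> unfolding Pset_prime_power[OF p] by auto
  define E where "E x y = of_nat p * Rentry (p ^ a) (p ^ s, p ^ t) (p ^ x, p ^ y)
    + Lentry (p ^ a) (p ^ s, p ^ t) (p ^ x, p ^ y)" for x y
  define C where "C M y = (\<Sum>x\<le>M. E x y)" for M y
  have inj: "inj_on (\<lambda>(y, x). (p ^ x, p ^ y)) (SIGMA y:{..a}. {..y})"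
    using prime_gt_1_nat[OF p] by (auto simp: inj_on_def)
  have "(\<Sum>q\<in>Pset (p ^ a). (of_nat p * Rentry (p ^ a) \<rho> q + Lentry (p ^ a) \<rho> q)
        * kernel_witness p m q)
      = (\<Sum>y\<le>a. \<Sum>x\<le>y. E x y * kernel_witness p m (p ^ x, p ^ y))"
    unfolding Pset_prime_power[OF p] sum.reindex[OF inj]
    by (simp add: sum.Sigma E_def split_def \<rho>_eq)
  also have "\<dots> = (\<Sum>y\<le>a. (if y = m then C m m else 0)
      + (if y = Suc m then (\<Sum>x\<le>Suc m. E x y * (if x = Suc m then 1 else - of_nat p)) else 0))"
    by (intro sum.cong) (auto simp: kernel_witness_prime_power[OF p] C_def)
  also have "\<dots> = C m m + (\<Sum>x\<le>Suc m. E x (Suc m) * (if x = Suc m then 1 else - of_nat p))"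
    using m by (simp add: sum.distrib)
  also have "\<dots> = C m m + C (Suc m) (Suc m) - (1 + of_nat p) * C m (Suc m)"
    by (simp add: C_def sum_distrib_left sum_negf algebra_simps)
  also have "\<dots> = 0"
  proof -
    have "C M y = pRL_column_sum p a s t M y" if "M \<le> y" "y \<le> a" for M y
      unfolding C_def E_def by (rule sum_pRL_column_prime_power[OF p st that])
    then show ?thesis using pRL_column_sum_identity[OF st(1) m] m by simp
  qed
  finally show ?thesis .
qed

lemma kernel_witness_independent:
  assumes p: "prime p" and m: "m < a"
    and vanish: "\<And>q. q \<in> Pset (p ^ a) \<Longrightarrow> (\<Sum>j<a. d j * kernel_witness p j q) = 0"
  shows "d m = 0"
proof -
  have "(\<Sum>j<a. d j * kernel_witness p j (p ^ x, p ^ Suc m))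
      = (if Suc m < a then d (Suc m) else 0) + d m * (if x = Suc m then 1 else - of_nat p)" for x
  proof -
    have "(\<Sum>j<a. d j * kernel_witness p j (p ^ x, p ^ Suc m))
        = (\<Sum>j<a. (if j = Suc m then d j else 0)
            + (if j = m then d j * (if x = Suc m then 1 else - of_nat p) else 0))"
      unfolding kernel_witness_prime_power[OF p] by (intro sum.cong) auto
    then show ?thesis using m by (simp add: sum.distrib)
  qed
  moreover have "(p ^ x, p ^ Suc m) \<in> Pset (p ^ a)" if "x \<le> Suc m" for x
    using le_imp_power_dvd[of "Suc m" a p] le_imp_power_dvd[of x "Suc m" p] that m
    by (simp add: Pset_def)
  ultimately have "(if Suc m < a then d (Suc m) else 0)
      + d m * (if x = Suc m then 1 else - of_nat p) = 0" if "x \<le> Suc m" for x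
    using vanish that by metis
  from this[of "Suc m"] this[of 0] have "(1 + of_nat p) * d m = 0"
    by (simp add: algebra_simps)
  then show ?thesis by (simp add: add_pos_nonneg)
qed

lemma finite_Pset: "0 < n \<Longrightarrow> finite (Pset n)"
  by (rule finite_subset[of _ "{..n} \<times> {..n}"]) (auto simp: Pset_def intro: dvd_imp_le dvd_trans)

lemma set_Pidx: "0 < n \<Longrightarrow> set (Pidx n) = Pset n"
  by (simp add: Pidx_def finite_Pset)

lemma mult_mat_vec_Pidx:
  assumes n: "0 < n" and r: "r < length (Pidx n)"
  shows "((c \<cdot>\<^sub>m Rmat n + Lmat n) *\<^sub>v vec (length (Pidx n)) (\<lambda>i. f (Pidx n ! i))) $ r
    = (\<Sum>q\<in>Pset n. (c * Rentry n (Pidx n ! r) q + Lentry n (Pidx n ! r) q) * f q)"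
proof -
  have "((c \<cdot>\<^sub>m Rmat n + Lmat n) *\<^sub>v vec (length (Pidx n)) (\<lambda>i. f (Pidx n ! i))) $ r
      = (\<Sum>i<length (Pidx n).
           (\<lambda>q. (c * Rentry n (Pidx n ! r) q + Lentry n (Pidx n ! r) q) * f q) (Pidx n ! i))"
    using r by (simp add: Rmat_def Lmat_def scalar_prod_def atLeast0LessThan)
  also have "\<dots> = (\<Sum>q\<in>Pset n. (c * Rentry n (Pidx n ! r) q + Lentry n (Pidx n ! r) q) * f q)"
    by (rule sum.reindex_bij_betw[OF bij_betw_nth])
      (simp_all add: Pidx_def finite_Pset[OF n])
  finally show ?thesis .
qed

lemma vec_Pidx_mat_kernel:
  assumes n: "0 < n"
    and rows: "\<And>\<rho>. \<rho> \<in> Pset n \<Longrightarrow> (\<Sum>q\<in>Pset n. (c * Rentry n \<rho> q + Lentry n \<rho> q) * f q) = 0"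
  shows "vec (length (Pidx n)) (\<lambda>i. f (Pidx n ! i)) \<in> mat_kernel (c \<cdot>\<^sub>m Rmat n + Lmat n)"
proof (rule mat_kernelI)
  show "c \<cdot>\<^sub>m Rmat n + Lmat n \<in> carrier_mat (length (Pidx n)) (length (Pidx n))"
    by (simp add: Rmat_def Lmat_def)
  have "Pidx n ! r \<in> Pset n" if "r < length (Pidx n)" for r
    using that set_Pidx[OF n] nth_mem by blast
  then show "(c \<cdot>\<^sub>m Rmat n + Lmat n) *\<^sub>v vec (length (Pidx n)) (\<lambda>i. f (Pidx n ! i))
      = 0\<^sub>v (length (Pidx n))"
    by (intro eq_vecI) (simp add: mult_mat_vec_Pidx[OF n] rows, simp add: Lmat_def)
qed simp

lemma kernel_dim_ge_card:
  fixes A :: "'a :: field mat"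
  assumes A: "A \<in> carrier_mat nr nc" and I: "finite I"
    and v: "\<And>i. i \<in> I \<Longrightarrow> v i \<in> mat_kernel A"
    and indep: "\<And>d. (\<And>j. j < nc \<Longrightarrow> (\<Sum>i\<in>I. d i * v i $ j) = 0) \<Longrightarrow> \<forall>i\<in>I. d i = 0"
  shows "card I \<le> kernel_dim A"
proof -
  interpret K: kernel nr nc A by unfold_locales (rule A)
  have inj: "inj_on v I"
  proof (rule inj_onI, rule ccontr)
    fix i i' assume i: "i \<in> I" "i' \<in> I" and eq: "v i = v i'" and ne: "i \<noteq> i'"
    define d :: "_ \<Rightarrow> 'a" where "d k = (if k = i then 1 else if k = i' then - 1 else 0)" for k
    have "(\<Sum>k\<in>I. d k * v k $ j) = 0" for j
    proof -
      have "(\<Sum>k\<in>I. d k * v k $ j)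
          = (\<Sum>k\<in>I. (if k = i then v i $ j else 0) + (if k = i' then - v i' $ j else 0))"
        using ne by (intro sum.cong) (auto simp: d_def)
      then show ?thesis using i I eq by (simp add: sum.distrib)
    qed
    then have "d i = 0" using indep i by blast
    then show False by (simp add: d_def)
  qed
  have W: "v ` I \<subseteq> mat_kernel A" using v by auto
  obtain B where "finite B" "K.basis B" using kernel_basis_exists[OF A] by blast
  then have fin_dim: "K.Ker.fin_dim" unfolding K.Ker.fin_dim_def by (auto simp: K.Ker.basis_def)
  have "K.lin_indpt (v ` I)"
  proof (rule K.Ker.finite_lin_indpt2)
    show "finite (v ` I)" using I by simp
    show "v ` I \<subseteq> mat_kernel A" by (rule W)
    fix c assume lc: "K.lincomb c (v ` I) = 0\<^sub>v nc"
    have "(\<Sum>i\<in>I. c (v i) * v i $ j) = 0" if j: "j < nc" for j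
    proof -
      have "0 = K.lincomb c (v ` I) $ j" using lc j by simp
      also have "\<dots> = (\<Sum>w\<in>v ` I. c w * w $ j)" by (rule K.lincomb_index[OF j W])
      finally show ?thesis by (simp add: sum.reindex[OF inj])
    qed
    then show "\<forall>w\<in>v ` I. c w = 0" using indep[of "c \<circ> v"] by auto
  qed
  then have "card (v ` I) \<le> K.dim" using K.Ker.li_le_dim(2)[OF fin_dim W] by blast
  then show ?thesis by (simp add: card_image[OF inj])
qed

theorem proposition5p2:
  fixes p a n :: nat
  assumes "prime p" and "a \<ge> 1" and "n = p ^ a"
  shows "kernel_dim (of_nat p \<cdot>\<^sub>m Rmat n + Lmat n) \<ge> a"
proof -
  note p = \<open>prime p\<close>
  have n: "0 < p ^ a" using p by (simp add: prime_gt_0_nat)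
  define w where
    "w m = vec (length (Pidx (p ^ a))) (\<lambda>i. kernel_witness p m (Pidx (p ^ a) ! i))" for m
  have "card {..<a} \<le> kernel_dim (of_nat p \<cdot>\<^sub>m Rmat (p ^ a) + Lmat (p ^ a))"
  proof (rule kernel_dim_ge_card[where v = w])
    show "of_nat p \<cdot>\<^sub>m Rmat (p ^ a) + Lmat (p ^ a)
        \<in> carrier_mat (length (Pidx (p ^ a))) (length (Pidx (p ^ a)))"
      by (simp add: Rmat_def Lmat_def)
    show "w m \<in> mat_kernel (of_nat p \<cdot>\<^sub>m Rmat (p ^ a) + Lmat (p ^ a))" if "m \<in> {..<a}" for m
      unfolding w_def using that
      by (intro vec_Pidx_mat_kernel[OF n] kernel_witness_row_sum[OF p]) simp_all
    fix d assume vanish: "\<And>j. j < length (Pidx (p ^ a)) \<Longrightarrow> (\<Sum>m<a. d m * w m $ j) = 0"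
    have "(\<Sum>m<a. d m * kernel_witness p m q) = 0" if "q \<in> Pset (p ^ a)" for q
    proof -
      have "q \<in> set (Pidx (p ^ a))" using that by (simp add: set_Pidx[OF n])
      then obtain j where "j < length (Pidx (p ^ a))" "Pidx (p ^ a) ! j = q"
        by (auto simp: in_set_conv_nth)
      then show ?thesis using vanish[of j] by (simp add: w_def)
    qed
    then show "\<forall>m\<in>{..<a}. d m = 0" using kernel_witness_independent[OF p] by blast
  qed simp
  then show ?thesis using \<open>n = p ^ a\<close> by simp
qed

end
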